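(* A regular Hausdorff space $X$ has a base of countable order if and only if $\mathcal{F}(X)$ has a base of countable order.
   Context: $\mathcal{F}(X)$ is the set of nonempty finite subsets of $X$ with the Vietoris topology (base: $\langle U_1,\dots,U_k\rangle=\{A: A\subset\bigcup_i U_i,\ A\cap U_j\neq\emptyset\ \forall j\}$, $U_i$ open in $X$). A space $Y$ has a base of countable order (BCO) if there is a sequence $\{\mathcal{B}_n\}$ of bases of $Y$ such that whenever $x\in b_n\in\mathcal{B}_n$ for all $n$ and $\{b_n\}$ is decreasing, $\{b_n\}$ is a neighborhood base at $x$. *)

theory Defs
  imports "HOL-Analysis.Analysis"
begin

definition fin_subsets :: "'a topology \<Rightarrow> 'a set set" where
  "fin_subsets X = {A. finite A \<and> A \<noteq> {} \<and> A \<subseteq> topspace X}"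

definition vietoris_base :: "'a topology \<Rightarrow> 'a set set set" where
  "vietoris_base X =
     {{A \<in> fin_subsets X. A \<subseteq> \<Union>\<U> \<and> (\<forall>U\<in>\<U>. A \<inter> U \<noteq> {})} | \<U>.
        finite \<U> \<and> \<U> \<noteq> {} \<and> (\<forall>U\<in>\<U>. openin X U)}"

definition vietoris_fin :: "'a topology \<Rightarrow> 'a set topology" where
  "vietoris_fin X = topology_generated_by (vietoris_base X)"

definition is_base :: "'a topology \<Rightarrow> 'a set set \<Rightarrow> bool" where
  "is_base Y \<B> \<longleftrightarrow> (\<forall>b\<in>\<B>. openin Y b) \<and>
     (\<forall>W x. openin Y W \<and> x \<in> W \<longrightarrow> (\<exists>b\<in>\<B>. x \<in> b \<and> b \<subseteq> W))"

definition has_BCO :: "'a topology \<Rightarrow> bool" where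
  "has_BCO Y \<longleftrightarrow> (\<exists>\<B> :: nat \<Rightarrow> 'a set set. (\<forall>n. is_base Y (\<B> n)) \<and>
     (\<forall>x b. x \<in> topspace Y \<and> (\<forall>n. x \<in> b n \<and> b n \<in> \<B> n) \<and> (\<forall>n. b (Suc n) \<subseteq> b n)
        \<longrightarrow> (\<forall>W. openin Y W \<and> x \<in> W \<longrightarrow> (\<exists>n. b n \<subseteq> W))))"

end

theory Submission
  imports Defs
begin

text \<open>
  The map \<open>x \<mapsto> {x}\<close> embeds \<open>X\<close> into \<open>\<F>(X)\<close>, and a base of countable order can be pulled
  back along any map inducing the topology of its domain.  For this the basic neighbourhoods of a
  point are chosen canonically, as least elements for a well-order of the power set: a decreasing
  sequence of pulled-back basic sets is then controlled by canonical chains of points that lie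
  ever deeper inside each other, and such chains stabilise level by level.

  Conversely, let \<open>X\<close> be Hausdorff with a base of countable order, which after passing to ends
  of chains may be assumed to work for every shift of indices.  Boxes \<open>\<langle>U\<^sub>1,\<dots>,U\<^sub>k\<rangle>\<close> with
  pairwise disjoint \<open>U\<^sub>i\<close> taken from the \<open>n\<close>-th base form the \<open>n\<close>-th base of \<open>\<F>(X)\<close>.
  Along a decreasing sequence of such boxes around a finite set \<open>A\<close>, the number of members is
  non-decreasing and bounded by \<open>|A|\<close>, hence eventually constant; from then on the member
  containing a point \<open>a \<in> A\<close> decreases and shrinks to \<open>a\<close>, so the boxes shrink to \<open>A\<close>.
\<close>

section \<open>Bases of countable order\<close>

definition shrinks_to :: "'a topology \<Rightarrow> 'a \<Rightarrow> (nat \<Rightarrow> 'a set) \<Rightarrow> bool" where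
  "shrinks_to X x b \<longleftrightarrow> (\<forall>W. openin X W \<and> x \<in> W \<longrightarrow> (\<exists>n. b n \<subseteq> W))"

definition countable_order_bases :: "'a topology \<Rightarrow> (nat \<Rightarrow> 'a set set) \<Rightarrow> bool" where
  "countable_order_bases X B \<longleftrightarrow> (\<forall>n. is_base X (B n)) \<and>
     (\<forall>x b. (\<forall>n. x \<in> b n \<and> b n \<in> B n) \<and> decseq b \<longrightarrow> shrinks_to X x b)"

lemma is_base_openin: "is_base X B \<Longrightarrow> b \<in> B \<Longrightarrow> openin X b"
  by (simp add: is_base_def)

lemma is_baseE:
  assumes "is_base X B" "openin X W" "x \<in> W"
  obtains b where "b \<in> B" "x \<in> b" "b \<subseteq> W"
  using assms unfolding is_base_def by blast

lemma has_BCO_iff: "has_BCO X \<longleftrightarrow> (\<exists>B. countable_order_bases X B)"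
proof
  assume "has_BCO X"
  then obtain B where B: "\<forall>n. is_base X (B n)"
    and conv: "\<forall>x b. x \<in> topspace X \<and> (\<forall>n. x \<in> b n \<and> b n \<in> B n) \<and> (\<forall>n. b (Suc n) \<subseteq> b n)
        \<longrightarrow> shrinks_to X x b"
    unfolding has_BCO_def shrinks_to_def by auto
  have "countable_order_bases X B"
    unfolding countable_order_bases_def decseq_Suc_iff
  proof (intro conjI allI impI)
    fix x b assume b: "(\<forall>n. x \<in> b n \<and> b n \<in> B n) \<and> (\<forall>n. b (Suc n) \<subseteq> b n)"
    then have "openin X (b 0)"
      using B is_base_openin by blast
    then have "x \<in> topspace X"
      using b openin_subset by blast
    then show "shrinks_to X x b"
      using conv b by simp
  qed (use B in simp)
  then show "\<exists>B. countable_order_bases X B" by (rule exI[of _ B])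
next
  assume "\<exists>B. countable_order_bases X B"
  then obtain B where "countable_order_bases X B" ..
  then show "has_BCO X"
    unfolding has_BCO_def countable_order_bases_def decseq_Suc_iff shrinks_to_def
    by (intro exI[of _ B]) blast
qed

lemma countable_order_basesD:
  "countable_order_bases X B \<Longrightarrow> (\<And>n. x \<in> b n \<and> b n \<in> B n) \<Longrightarrow> decseq b \<Longrightarrow> shrinks_to X x b"
  by (simp add: countable_order_bases_def)

definition chain_ends :: "(nat \<Rightarrow> 'a set set) \<Rightarrow> nat \<Rightarrow> 'a set set" where
  "chain_ends B n = {c n | c. decseq c \<and> (\<forall>i\<le>n. c i \<in> B i)}"

lemma chain_ends_subset: "chain_ends B n \<subseteq> B n"
  unfolding chain_ends_def by auto

lemma decseq_glue:
  fixes c d :: "nat \<Rightarrow> 'a set"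
  assumes "decseq c" "decseq d" "d 0 \<subseteq> c N"
  shows "decseq (\<lambda>i. if i \<le> N then c i else d (i - N))"
proof (rule decseq_SucI)
  fix i
  consider "Suc i \<le> N" | "i = N" | "N < i" by linarith
  then show "(if Suc i \<le> N then c (Suc i) else d (Suc i - N)) \<subseteq> (if i \<le> N then c i else d (i - N))"
  proof cases
    case 2
    then show ?thesis using assms(3) decseqD[OF assms(2), of 0 1] by simp
  qed (use assms in \<open>auto simp: decseq_Suc_iff Suc_diff_le\<close>)
qed

lemma is_base_chain_ends:
  assumes B: "\<And>n. is_base X (B n)"
  shows "is_base X (chain_ends B n)"
proof -
  have chain: "\<exists>c. decseq c \<and> (\<forall>i\<le>n. c i \<in> B i) \<and> x \<in> c n \<and> c n \<subseteq> W"
    if W: "openin X W" "x \<in> W" for W x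
  proof (induction n)
    case 0
    obtain d where "d \<in> B 0" "x \<in> d" "d \<subseteq> W" using is_baseE[OF B[of 0] W] .
    then show ?case by (intro exI[of _ "\<lambda>_. d"]) auto
  next
    case (Suc n)
    then obtain c where c: "decseq c" "\<forall>i\<le>n. c i \<in> B i" "x \<in> c n" "c n \<subseteq> W"
      by blast
    have "openin X (c n)"
      using c(2) is_base_openin[OF B] by blast
    then obtain d where d: "d \<in> B (Suc n)" "x \<in> d" "d \<subseteq> c n"
      using is_baseE[OF B[of "Suc n"] _ c(3)] by blast
    have "decseq (\<lambda>i. if i \<le> n then c i else d)"
      using decseq_glue[of c "\<lambda>_. d" n] c(1) d(3) by simp
    moreover have "\<forall>i\<le>Suc n. (if i \<le> n then c i else d) \<in> B i"
      using c(2) d(1) by (simp add: le_Suc_eq)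
    ultimately show ?case
      using c(4) d by (intro exI[of _ "\<lambda>i. if i \<le> n then c i else d"] conjI) simp_all
  qed
  show ?thesis
    unfolding is_base_def
  proof (intro conjI ballI allI impI)
    fix b assume "b \<in> chain_ends B n"
    then show "openin X b" using chain_ends_subset is_base_openin[OF B] by blast
  next
    fix W x assume "openin X W \<and> x \<in> W"
    then obtain c where c: "decseq c" "\<forall>i\<le>n. c i \<in> B i" "x \<in> c n" "c n \<subseteq> W"
      using chain by blast
    then have "c n \<in> chain_ends B n"
      unfolding chain_ends_def by blast
    with c show "\<exists>b\<in>chain_ends B n. x \<in> b \<and> b \<subseteq> W" by blast
  qed
qed

text \<open>Passing from \<open>B\<close> to the ends of chains of \<open>B\<close> makes the countable order property
  survive a shift of indices: a chain starting at level \<open>N\<close> can be prefixed by the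
  chain witnessing its first member.\<close>
lemma countable_order_bases_chain_ends_shift:
  assumes B: "countable_order_bases X B"
  shows "countable_order_bases X (\<lambda>n. chain_ends B (n + N))"
  unfolding countable_order_bases_def
proof (intro conjI allI impI)
  fix n show "is_base X (chain_ends B (n + N))"
    using B by (simp add: countable_order_bases_def is_base_chain_ends)
next
  fix x b assume b: "(\<forall>n. x \<in> b n \<and> b n \<in> chain_ends B (n + N)) \<and> decseq b"
  then have "b 0 \<in> chain_ends B N" by (metis add_0)
  then obtain c where c: "decseq c" "\<forall>i\<le>N. c i \<in> B i" "c N = b 0"
    unfolding chain_ends_def by blast
  define e where "e i = (if i \<le> N then c i else b (i - N))" for i
  have b0_e: "b 0 \<subseteq> e i" if "i \<le> N" for i
    using that c decseqD[OF c(1) that] by (simp add: e_def)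
  have "x \<in> e i \<and> e i \<in> B i" for i
  proof (cases "i \<le> N")
    case True
    then show ?thesis using b b0_e[OF True] c(2) by (auto simp: e_def)
  next
    case False
    then have "b (i - N) \<in> chain_ends B i" using b by (metis le_add_diff_inverse2 nat_le_linear)
    then show ?thesis using False b chain_ends_subset by (auto simp: e_def)
  qed
  moreover have "decseq e"
    unfolding e_def using decseq_glue[of c b N] c b by simp
  ultimately have e: "shrinks_to X x e" by (rule countable_order_basesD[OF B])
  show "shrinks_to X x b"
    unfolding shrinks_to_def
  proof (intro allI impI)
    fix W assume "openin X W \<and> x \<in> W"
    then obtain i where i: "e i \<subseteq> W" using e unfolding shrinks_to_def by blast
    show "\<exists>n. b n \<subseteq> W"
    proof (cases "i \<le> N")
      case True
      then show ?thesis using b0_e[OF True] i by blast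
    next
      case False
      then show ?thesis using i unfolding e_def by auto
    qed
  qed
qed

section \<open>Pulling back bases of countable order\<close>

lemma (in wo_rel) eventually_const_if_eventually_antimono:
  assumes UNIV: "Field r = UNIV" and dec: "eventually (\<lambda>k. (a (Suc k), a k) \<in> r) sequentially"
  shows "\<exists>c. eventually (\<lambda>k. a k = c) sequentially"
proof -
  obtain N where N: "\<And>k. N \<le> k \<Longrightarrow> (a (Suc k), a k) \<in> r"
    using dec unfolding eventually_sequentially by blast
  have "minim (a ` {N..}) \<in> a ` {N..}"
    using UNIV by (intro minim_in) auto
  then obtain K where K: "N \<le> K" "a K = minim (a ` {N..})" by auto
  have "(a k, a K) \<in> r" if "K \<le> k" for k
    using that
  proof (induction rule: dec_induct)
    case base
    then show ?case using REFL UNIV by (simp add: refl_on_def)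
  next
    case (step k)
    then show ?case using N[of k] K(1) TRANS by (meson le_trans transD)
  qed
  moreover have "(a K, a k) \<in> r" if "K \<le> k" for k
    using that K UNIV by (auto intro: minim_least)
  ultimately have "\<forall>k\<ge>K. a k = a K"
    using ANTISYM by (auto dest: antisymD)
  then show ?thesis
    unfolding eventually_sequentially by blast
qed

text \<open>Choosing basic neighbourhoods \<open>r\<close>-minimally is what makes the canonical chains
  of different points comparable.\<close>
locale least_chains = wo_rel r for r :: "'a set rel" +
  fixes Z :: "'a topology" and C :: "nat \<Rightarrow> 'a set set"
  assumes Field_r: "Field r = UNIV" and bases: "countable_order_bases Z C"
begin

definition least_nbhd :: "nat \<Rightarrow> 'a \<Rightarrow> 'a set \<Rightarrow> 'a set" where
  "least_nbhd n z U = minim {c \<in> C n. z \<in> c \<and> c \<subseteq> U}"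

fun least_chain :: "'a \<Rightarrow> nat \<Rightarrow> 'a set" where
  "least_chain z 0 = least_nbhd 0 z (topspace Z)"
| "least_chain z (Suc n) = least_nbhd (Suc n) z (least_chain z n)"

lemma is_base_C: "is_base Z (C n)"
  using bases by (simp add: countable_order_bases_def)

lemma least_nbhd_in_base:
  assumes "openin Z U" "z \<in> U"
  shows "least_nbhd n z U \<in> C n \<and> z \<in> least_nbhd n z U \<and> least_nbhd n z U \<subseteq> U"
proof -
  have "{c \<in> C n. z \<in> c \<and> c \<subseteq> U} \<noteq> {}"
    using is_baseE[OF is_base_C assms] by blast
  then show ?thesis
    unfolding least_nbhd_def using minim_in[of "{c \<in> C n. z \<in> c \<and> c \<subseteq> U}"] Field_r by simp
qed

lemma least_nbhd_least:
  "c \<in> C n \<Longrightarrow> z \<in> c \<Longrightarrow> c \<subseteq> U \<Longrightarrow> (least_nbhd n z U, c) \<in> r"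
  unfolding least_nbhd_def by (rule minim_least) (simp_all add: Field_r)

lemma least_chain_in_base:
  assumes "z \<in> topspace Z"
  shows "least_chain z n \<in> C n \<and> z \<in> least_chain z n \<and> openin Z (least_chain z n)"
proof (induction n)
  case 0
  have "least_chain z 0 \<in> C 0 \<and> z \<in> least_chain z 0"
    using least_nbhd_in_base[OF openin_topspace assms] by simp
  then show ?case using is_base_openin[OF is_base_C] by blast
next
  case (Suc n)
  then have "least_chain z (Suc n) \<in> C (Suc n) \<and> z \<in> least_chain z (Suc n)"
    using least_nbhd_in_base[of "least_chain z n" z "Suc n"] by simp
  then show ?case using is_base_openin[OF is_base_C] by blast
qed

lemma decseq_least_chain:
  assumes "z \<in> topspace Z"
  shows "decseq (least_chain z)"
proof (rule decseq_SucI)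
  fix n show "least_chain z (Suc n) \<subseteq> least_chain z n"
    using least_nbhd_in_base[of "least_chain z n" z "Suc n"] least_chain_in_base[OF assms, of n] by simp
qed

lemma least_chain_least:
  assumes z: "z \<in> topspace Z" and z': "z' \<in> least_chain z n"
    and prev: "\<And>m. n = Suc m \<Longrightarrow> least_chain z' m = least_chain z m"
  shows "(least_chain z' n, least_chain z n) \<in> r"
proof (cases n)
  case 0
  have "least_chain z 0 \<subseteq> topspace Z"
    using least_chain_in_base[OF z, of 0] openin_subset by blast
  then have "(least_nbhd 0 z' (topspace Z), least_chain z 0) \<in> r"
    using least_chain_in_base[OF z, of 0] z' 0 by (simp add: least_nbhd_least)
  then show ?thesis using 0 by simp
next
  case (Suc m)
  have "least_chain z (Suc m) \<subseteq> least_chain z' m"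
    using decseqD[OF decseq_least_chain[OF z], of m "Suc m"] prev[OF Suc] by simp
  then have "(least_nbhd (Suc m) z' (least_chain z' m), least_chain z (Suc m)) \<in> r"
    using least_chain_in_base[OF z, of "Suc m"] z' Suc by (simp add: least_nbhd_least)
  then show ?thesis using Suc by simp
qed

text \<open>Induction on the level: once level \<open>j\<close> has stabilised, level \<open>Suc j\<close> is eventually
  non-increasing in the well-order, hence eventually constant.\<close>
lemma least_chain_stabilises:
  assumes y: "\<And>k. y k \<in> topspace Z" and m: "\<And>k. k \<le> m k"
    and nested: "\<And>k. y (Suc k) \<in> least_chain (y k) (m k)"
  shows "\<exists>c. eventually (\<lambda>k. least_chain (y k) j = c) sequentially"
proof (induction j)
  case 0
  have "(least_chain (y (Suc k)) 0, least_chain (y k) 0) \<in> r" for k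
  proof (rule least_chain_least[OF y])
    show "y (Suc k) \<in> least_chain (y k) 0"
      using nested[of k] decseqD[OF decseq_least_chain[OF y], of 0 "m k"] by blast
  qed simp
  then show ?case
    by (intro eventually_const_if_eventually_antimono[OF Field_r] always_eventually) simp
next
  case (Suc j)
  then obtain c where c: "eventually (\<lambda>k. least_chain (y k) j = c) sequentially" ..
  have "eventually (\<lambda>k. Suc j \<le> m k) sequentially"
    using eventually_ge_at_top[of "Suc j"] by (rule eventually_mono) (use m le_trans in blast)
  moreover have "eventually (\<lambda>k. least_chain (y (Suc k)) j = c) sequentially"
    using c eventually_sequentially_Suc[of "\<lambda>k. least_chain (y k) j = c"] by simp
  ultimately have "eventually (\<lambda>k. (least_chain (y (Suc k)) (Suc j), least_chain (y k) (Suc j)) \<in> r) sequentially"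
    using c
  proof eventually_elim
    case (elim k)
    show ?case
    proof (rule least_chain_least[OF y])
      show "y (Suc k) \<in> least_chain (y k) (Suc j)"
        using nested[of k] decseqD[OF decseq_least_chain[OF y] elim(1)] by blast
    qed (use elim in simp)
  qed
  then show ?case
    by (rule eventually_const_if_eventually_antimono[OF Field_r])
qed

lemma least_chain_shrinks:
  assumes "z \<in> topspace Z"
  shows "shrinks_to Z z (least_chain z)"
  by (rule countable_order_basesD[OF bases])
    (simp_all add: least_chain_in_base[OF assms] decseq_least_chain[OF assms])

lemma least_chain_eventually:
  assumes y: "\<And>k. y k \<in> topspace Z" and m: "\<And>k. k \<le> m k"
    and nested: "\<And>k. y (Suc k) \<in> least_chain (y k) (m k)"
  obtains g where "\<And>j. eventually (\<lambda>k. j \<le> m k \<and> least_chain (y k) j = g j) sequentially"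
proof -
  have "\<forall>j. \<exists>c. eventually (\<lambda>k. least_chain (y k) j = c) sequentially"
    using least_chain_stabilises[OF y m nested] by blast
  then obtain g where stable: "\<forall>j. eventually (\<lambda>k. least_chain (y k) j = g j) sequentially"
    by (rule choice[THEN exE])
  have "eventually (\<lambda>k. j \<le> m k \<and> least_chain (y k) j = g j) sequentially" for j
    using eventually_conj[OF eventually_ge_at_top[of j] stable[rule_format, of j]]
    by (rule eventually_mono) (meson m le_trans)
  then show ?thesis
    using that by blast
qed

text \<open>The eventual values of the levels form a decreasing chain of basic sets around \<open>p\<close>,
  which shrinks to \<open>p\<close>; each \<open>least_chain (y k) (m k)\<close> lies inside one of them.\<close>
lemma least_chain_limit:
  assumes y: "\<And>k. y k \<in> topspace Z" and m: "\<And>k. k \<le> m k"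
    and nested: "\<And>k. y (Suc k) \<in> least_chain (y k) (m k)"
    and p: "\<And>k. p \<in> least_chain (y k) (m k)"
  shows "shrinks_to Z p (\<lambda>k. least_chain (y k) (m k))"
proof -
  obtain g where ev: "\<And>j. eventually (\<lambda>k. j \<le> m k \<and> least_chain (y k) j = g j) sequentially"
    using least_chain_eventually[OF y m nested] by blast
  have at: "\<exists>k. j \<le> m k \<and> least_chain (y k) j = g j \<and> least_chain (y k) (Suc j) = g (Suc j)" for j
    using eventually_happens'[OF trivial_limit_sequentially eventually_conj[OF ev[of j] ev[of "Suc j"]]]
    by blast
  have "p \<in> g j \<and> g j \<in> C j" for j
  proof -
    obtain k where "j \<le> m k" "least_chain (y k) j = g j"
      using at by blast
    then show ?thesis
      using p[of k] decseqD[OF decseq_least_chain[OF y], of j "m k" k] least_chain_in_base[OF y, of k j]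
      by auto
  qed
  moreover have "decseq g"
  proof (rule decseq_SucI)
    fix j
    obtain k where "least_chain (y k) j = g j" "least_chain (y k) (Suc j) = g (Suc j)"
      using at by blast
    then show "g (Suc j) \<subseteq> g j"
      using decseqD[OF decseq_least_chain[OF y], of j "Suc j" k] by simp
  qed
  ultimately have g: "shrinks_to Z p g"
    by (intro countable_order_basesD[OF bases]) simp
  show ?thesis
    unfolding shrinks_to_def
  proof (intro allI impI)
    fix W assume "openin Z W \<and> p \<in> W"
    then obtain j where j: "g j \<subseteq> W"
      using g unfolding shrinks_to_def by blast
    obtain k where "j \<le> m k" "least_chain (y k) j = g j"
      using at by blast
    then have "least_chain (y k) (m k) \<subseteq> W"
      using j decseqD[OF decseq_least_chain[OF y], of j "m k" k] by simp
    then show "\<exists>k. least_chain (y k) (m k) \<subseteq> W" ..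
  qed
qed

end

locale chain_pullback = least_chains r Z C for r :: "'a set rel" and Z C +
  fixes X :: "'b topology" and f :: "'b \<Rightarrow> 'a"
  assumes continuous: "continuous_map X Z f"
    and initial: "\<And>W x. openin X W \<Longrightarrow> x \<in> W \<Longrightarrow>
      \<exists>V. openin Z V \<and> f x \<in> V \<and> {y \<in> topspace X. f y \<in> V} \<subseteq> W"
begin

definition pre :: "'a set \<Rightarrow> 'b set" where
  "pre U = {x \<in> topspace X. f x \<in> U}"

text \<open>Requiring depth at least \<open>n\<close> at level \<open>n\<close> forces the depths along any decreasing
  sequence of these sets to tend to infinity.\<close>
definition pulled_bases :: "nat \<Rightarrow> 'b set set" where
  "pulled_bases n = {pre (least_chain (f z) m) | z m. z \<in> topspace X \<and> n \<le> m}"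

lemma f_topspace: "x \<in> topspace X \<Longrightarrow> f x \<in> topspace Z"
  using continuous_map_image_subset_topspace[OF continuous] by blast

lemma initial_pre:
  assumes "openin X W" "x \<in> W"
  obtains V where "openin Z V" "f x \<in> V" "pre V \<subseteq> W"
  using initial[OF assms] unfolding pre_def by blast

lemma is_base_pulled_bases: "is_base X (pulled_bases n)"
  unfolding is_base_def
proof (intro conjI ballI allI impI)
  fix b assume "b \<in> pulled_bases n"
  then obtain z m where "z \<in> topspace X" "b = pre (least_chain (f z) m)"
    unfolding pulled_bases_def by blast
  then show "openin X b"
    unfolding pre_def using openin_continuous_map_preimage[OF continuous] least_chain_in_base[OF f_topspace]
    by simp
next
  fix W x assume W: "openin X W \<and> x \<in> W"
  then have x: "x \<in> topspace X"
    using openin_subset[of X W] by blast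
  obtain V where V: "openin Z V" "f x \<in> V" "pre V \<subseteq> W"
    using initial_pre W by blast
  then obtain m where "least_chain (f x) m \<subseteq> V"
    using least_chain_shrinks[OF f_topspace[OF x]] unfolding shrinks_to_def by blast
  then have "least_chain (f x) (max m n) \<subseteq> V"
    using decseqD[OF decseq_least_chain[OF f_topspace[OF x]], of m "max m n"] by simp
  then have "pre (least_chain (f x) (max m n)) \<subseteq> W"
    using V(3) unfolding pre_def by blast
  moreover have "x \<in> pre (least_chain (f x) (max m n))"
    using x least_chain_in_base[OF f_topspace[OF x], of "max m n"] unfolding pre_def by simp
  moreover have "pre (least_chain (f x) (max m n)) \<in> pulled_bases n"
    unfolding pulled_bases_def using x by (intro CollectI exI[of _ x] exI[of _ "max m n"] conjI) simp_all
  ultimately show "\<exists>b\<in>pulled_bases n. x \<in> b \<and> b \<subseteq> W" by blast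
qed

lemma pulled_bases_shrink:
  assumes b: "\<And>n. x \<in> b n \<and> b n \<in> pulled_bases n" and "decseq b"
  shows "shrinks_to X x b"
proof -
  have "\<exists>z m. b k = pre (least_chain (f z) m) \<and> z \<in> topspace X \<and> k \<le> m" for k
    using conjunct2[OF b[of k]] unfolding pulled_bases_def mem_Collect_eq by assumption
  then obtain z where "\<forall>k. \<exists>m. b k = pre (least_chain (f (z k)) m) \<and> z k \<in> topspace X \<and> k \<le> m"
    by (metis choice)
  then obtain m where "\<forall>k. b k = pre (least_chain (f (z k)) (m k)) \<and> z k \<in> topspace X \<and> k \<le> m k"
    by (rule choice[THEN exE])
  then have z: "\<And>k. z k \<in> topspace X" and m: "\<And>k. k \<le> m k"
    and b_eq: "\<And>k. b k = pre (least_chain (f (z k)) (m k))"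
    by simp_all
  have "z (Suc k) \<in> b k" for k
  proof -
    have "z (Suc k) \<in> b (Suc k)"
      using b_eq z least_chain_in_base[OF f_topspace[OF z]] unfolding pre_def by simp
    then show ?thesis
      using decseqD[OF \<open>decseq b\<close>, of k "Suc k"] by auto
  qed
  then have lim: "shrinks_to Z (f x) (\<lambda>k. least_chain (f (z k)) (m k))"
    using b b_eq unfolding pre_def
    by (intro least_chain_limit[of "\<lambda>k. f (z k)" m "f x"]) (simp_all add: f_topspace z m)
  show ?thesis
    unfolding shrinks_to_def
  proof (intro allI impI)
    fix W assume "openin X W \<and> x \<in> W"
    then obtain V where V: "openin Z V" "f x \<in> V" "pre V \<subseteq> W"
      using initial_pre by blast
    then obtain k where "least_chain (f (z k)) (m k) \<subseteq> V"
      using lim unfolding shrinks_to_def by blast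
    then have "b k \<subseteq> W"
      using V(3) b_eq[of k] unfolding pre_def by blast
    then show "\<exists>k. b k \<subseteq> W" ..
  qed
qed

lemma countable_order_bases_pulled: "countable_order_bases X pulled_bases"
  unfolding countable_order_bases_def
  using is_base_pulled_bases pulled_bases_shrink by blast

end

lemma has_BCO_pullback:
  fixes f :: "'a \<Rightarrow> 'b"
  assumes "has_BCO Z" and f: "continuous_map X Z f"
    and initial: "\<And>W x. openin X W \<Longrightarrow> x \<in> W \<Longrightarrow>
      \<exists>V. openin Z V \<and> f x \<in> V \<and> {y \<in> topspace X. f y \<in> V} \<subseteq> W"
  shows "has_BCO X"
proof -
  obtain C where C: "countable_order_bases Z C"
    using assms(1) unfolding has_BCO_iff ..
  obtain r :: "'b set rel" where r: "Well_order r" "Field r = UNIV"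
    using well_ordering[where 'a="'b set"] by (elim exE conjE)
  interpret chain_pullback r Z C X f
    by unfold_locales (fact r C f initial)+
  show ?thesis
    unfolding has_BCO_iff using countable_order_bases_pulled by blast
qed

section \<open>Boxes in the Vietoris topology\<close>

definition vbox :: "'a topology \<Rightarrow> 'a set set \<Rightarrow> 'a set set" where
  "vbox X \<U> = {A \<in> fin_subsets X. A \<subseteq> \<Union>\<U> \<and> (\<forall>U\<in>\<U>. A \<inter> U \<noteq> {})}"

lemma vietoris_base_eq:
  "vietoris_base X = {vbox X \<U> | \<U>. finite \<U> \<and> \<U> \<noteq> {} \<and> (\<forall>U\<in>\<U>. openin X U)}"
  unfolding vietoris_base_def vbox_def by simp

lemma openin_vbox:
  assumes "finite \<U>" "\<U> \<noteq> {}" "\<forall>U\<in>\<U>. openin X U"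
  shows "openin (vietoris_fin X) (vbox X \<U>)"
  unfolding vietoris_fin_def
  by (rule topology_generated_by_Basis) (use assms in \<open>auto simp: vietoris_base_eq\<close>)

lemma topspace_vietoris_fin: "topspace (vietoris_fin X) = fin_subsets X"
proof -
  have "vbox X {topspace X} \<in> vietoris_base X"
    unfolding vietoris_base_eq by (intro CollectI exI[of _ "{topspace X}"]) simp
  moreover have "vbox X {topspace X} = fin_subsets X"
    by (auto simp: vbox_def fin_subsets_def)
  moreover have "\<Union>(vietoris_base X) \<subseteq> fin_subsets X"
    by (auto simp: vietoris_base_def)
  ultimately have "\<Union>(vietoris_base X) = fin_subsets X"
    by blast
  then show ?thesis
    by (simp add: vietoris_fin_def)
qed

definition vbox_core :: "'a topology \<Rightarrow> 'a set set \<Rightarrow> 'a \<Rightarrow> 'a set" where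
  "vbox_core X \<V> a = topspace X \<inter> \<Inter>{V \<in> \<V>. a \<in> V}"

lemma openin_vbox_core: "finite \<V> \<Longrightarrow> \<forall>V\<in>\<V>. openin X V \<Longrightarrow> openin X (vbox_core X \<V> a)"
  unfolding vbox_core_def by (rule openin_Int_Inter) auto

lemma vbox_core_antimono: "\<V> \<subseteq> \<V>' \<Longrightarrow> vbox_core X \<V>' a \<subseteq> vbox_core X \<V> a"
  unfolding vbox_core_def by blast

lemma in_vbox_core: "A \<in> vbox X \<V> \<Longrightarrow> a \<in> A \<Longrightarrow> a \<in> vbox_core X \<V> a"
  unfolding vbox_core_def vbox_def fin_subsets_def by blast

lemma vbox_refine:
  assumes A: "A \<in> vbox X \<V>" and U: "\<And>a. a \<in> A \<Longrightarrow> a \<in> U a \<and> U a \<subseteq> vbox_core X \<V> a"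
  shows "A \<in> vbox X (U ` A)" and "vbox X (U ` A) \<subseteq> vbox X \<V>"
proof -
  show "A \<in> vbox X (U ` A)"
    using A U unfolding vbox_def by blast
  show "vbox X (U ` A) \<subseteq> vbox X \<V>"
  proof
    fix S assume S: "S \<in> vbox X (U ` A)"
    have "S \<subseteq> \<Union>\<V>"
    proof
      fix s assume "s \<in> S"
      then obtain a where a: "a \<in> A" "s \<in> U a"
        using S unfolding vbox_def by blast
      moreover obtain V where "V \<in> \<V>" "a \<in> V"
        using A a(1) unfolding vbox_def by blast
      ultimately show "s \<in> \<Union>\<V>"
        using U unfolding vbox_core_def by blast
    qed
    moreover have "S \<inter> V \<noteq> {}" if V: "V \<in> \<V>" for V
    proof -
      obtain a where a: "a \<in> A" "a \<in> V"
        using A V unfolding vbox_def by blast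
      then have "U a \<subseteq> V"
        using U V unfolding vbox_core_def by blast
      moreover have "S \<inter> U a \<noteq> {}"
        using S a(1) unfolding vbox_def by blast
      ultimately show ?thesis by blast
    qed
    ultimately show "S \<in> vbox X \<V>"
      using S unfolding vbox_def by blast
  qed
qed

lemma vbox_Int:
  assumes "finite \<V>\<^sub>1" "\<forall>V\<in>\<V>\<^sub>1. openin X V" "finite \<V>\<^sub>2" "\<forall>V\<in>\<V>\<^sub>2. openin X V"
    and A: "A \<in> vbox X \<V>\<^sub>1" "A \<in> vbox X \<V>\<^sub>2"
  obtains \<W> where "finite \<W>" "\<W> \<noteq> {}" "\<forall>W\<in>\<W>. openin X W" "A \<in> vbox X \<W>"
    "vbox X \<W> \<subseteq> vbox X \<V>\<^sub>1 \<inter> vbox X \<V>\<^sub>2"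
proof -
  define U where "U = vbox_core X (\<V>\<^sub>1 \<union> \<V>\<^sub>2)"
  have A12: "A \<in> vbox X (\<V>\<^sub>1 \<union> \<V>\<^sub>2)"
    using A unfolding vbox_def by blast
  have "finite A" "A \<noteq> {}"
    using A(1) unfolding vbox_def fin_subsets_def by auto
  then have fin: "finite (U ` A)" "U ` A \<noteq> {}"
    by simp_all
  have "openin X (U a)" for a
    unfolding U_def using assms(1-4) by (intro openin_vbox_core) auto
  then have open_U: "\<forall>W\<in>U ` A. openin X W"
    by simp
  have U1: "a \<in> U a \<and> U a \<subseteq> vbox_core X \<V>\<^sub>1 a" and U2: "a \<in> U a \<and> U a \<subseteq> vbox_core X \<V>\<^sub>2 a"
    if "a \<in> A" for a
    unfolding U_def using in_vbox_core[OF A12 that] vbox_core_antimono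
    by (metis Un_upper1, metis Un_upper2)
  show ?thesis
  proof (rule that[OF fin open_U vbox_refine(1)[OF A(1) U1]])
    show "vbox X (U ` A) \<subseteq> vbox X \<V>\<^sub>1 \<inter> vbox X \<V>\<^sub>2"
      using vbox_refine(2)[OF A(1) U1] vbox_refine(2)[OF A(2) U2] by (rule Int_greatest)
  qed
qed

lemma openin_vietoris_finE:
  assumes "openin (vietoris_fin X) \<O>" "A \<in> \<O>"
  obtains \<V> where "finite \<V>" "\<V> \<noteq> {}" "\<forall>V\<in>\<V>. openin X V" "A \<in> vbox X \<V>" "vbox X \<V> \<subseteq> \<O>"
proof -
  have "generate_topology_on (vietoris_base X) \<O>"
    using assms(1) unfolding vietoris_fin_def openin_topology_generated_by_iff .
  then have "\<forall>A\<in>\<O>. \<exists>\<V>. finite \<V> \<and> \<V> \<noteq> {} \<and> (\<forall>V\<in>\<V>. openin X V) \<and> A \<in> vbox X \<V> \<and> vbox X \<V> \<subseteq> \<O>"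
  proof (induction rule: generate_topology_on.induct)
    case (Int s t)
    show ?case
    proof
      fix A assume A: "A \<in> s \<inter> t"
      obtain \<V>\<^sub>1 where \<V>\<^sub>1: "finite \<V>\<^sub>1" "\<forall>V\<in>\<V>\<^sub>1. openin X V" "A \<in> vbox X \<V>\<^sub>1" "vbox X \<V>\<^sub>1 \<subseteq> s"
        using Int.IH(1) A by blast
      obtain \<V>\<^sub>2 where \<V>\<^sub>2: "finite \<V>\<^sub>2" "\<forall>V\<in>\<V>\<^sub>2. openin X V" "A \<in> vbox X \<V>\<^sub>2" "vbox X \<V>\<^sub>2 \<subseteq> t"
        using Int.IH(2) A by blast
      obtain \<W> where "finite \<W>" "\<W> \<noteq> {}" "\<forall>W\<in>\<W>. openin X W" "A \<in> vbox X \<W>"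
        "vbox X \<W> \<subseteq> vbox X \<V>\<^sub>1 \<inter> vbox X \<V>\<^sub>2"
        using vbox_Int[OF \<V>\<^sub>1(1,2) \<V>\<^sub>2(1,2) \<V>\<^sub>1(3) \<V>\<^sub>2(3)] .
      with \<V>\<^sub>1(4) \<V>\<^sub>2(4) show "\<exists>\<V>. finite \<V> \<and> \<V> \<noteq> {} \<and> (\<forall>V\<in>\<V>. openin X V) \<and> A \<in> vbox X \<V> \<and> vbox X \<V> \<subseteq> s \<inter> t"
        by (intro exI[of _ \<W>]) blast
    qed
  next
    case (UN K)
    show ?case
    proof
      fix A assume "A \<in> \<Union>K"
      then obtain k where k: "A \<in> k" "k \<in> K" by (rule UnionE)
      obtain \<V> where "finite \<V>" "\<V> \<noteq> {}" "\<forall>V\<in>\<V>. openin X V" "A \<in> vbox X \<V>" "vbox X \<V> \<subseteq> k"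
        using bspec[OF UN.IH[OF k(2)] k(1)] by blast
      with k(2) show "\<exists>\<V>. finite \<V> \<and> \<V> \<noteq> {} \<and> (\<forall>V\<in>\<V>. openin X V) \<and> A \<in> vbox X \<V> \<and> vbox X \<V> \<subseteq> \<Union>K"
        by (intro exI[of _ \<V>]) blast
    qed
  next
    case (Basis s)
    then obtain \<U> where "s = vbox X \<U>" "finite \<U>" "\<U> \<noteq> {}" "\<forall>U\<in>\<U>. openin X U"
      unfolding vietoris_base_eq by blast
    then show ?case
      by (intro ballI exI[of _ \<U>]) simp
  qed simp
  then show ?thesis
    using assms(2) that by blast
qed

lemma vbox_subset_imp_refines:
  assumes sub: "vbox X \<W> \<subseteq> vbox X \<U>" and "finite \<W>" "\<W> \<noteq> {}" "\<forall>W\<in>\<W>. W \<subseteq> topspace X"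
    and "U \<in> \<U>"
  shows "\<exists>W\<in>\<W>. W \<subseteq> U"
proof (rule ccontr)
  assume "\<not> (\<exists>W\<in>\<W>. W \<subseteq> U)"
  then have "\<forall>W\<in>\<W>. \<exists>p. p \<in> W \<and> p \<notin> U"
    by blast
  then obtain p where p: "\<forall>W\<in>\<W>. p W \<in> W \<and> p W \<notin> U"
    by (rule bchoice[THEN exE])
  have "p ` \<W> \<in> vbox X \<W>"
    using p assms(2-4) unfolding vbox_def fin_subsets_def by blast
  then have "p ` \<W> \<inter> U \<noteq> {}"
    using sub \<open>U \<in> \<U>\<close> unfolding vbox_def by blast
  then show False
    using p by blast
qed

section \<open>Finite disjoint families\<close>

lemma card_le_card_if_disjoint_meets:
  assumes "pairwise disjnt \<U>" "finite A" "\<forall>U\<in>\<U>. A \<inter> U \<noteq> {}"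
  shows "card \<U> \<le> card A"
proof -
  define h where "h U = (SOME a. a \<in> A \<inter> U)" for U
  have h: "\<forall>U\<in>\<U>. h U \<in> A \<inter> U"
    unfolding h_def some_in_eq by (rule assms(3))
  have "inj_on h \<U>"
  proof (rule inj_onI)
    fix U V assume UV: "U \<in> \<U>" "V \<in> \<U>" "h U = h V"
    then have "\<not> disjnt U V"
      using h by (metis IntE disjnt_iff)
    then show "U = V"
      using assms(1) UV(1,2) by (meson pairwiseD)
  qed
  moreover have "h ` \<U> \<subseteq> A"
    using h by blast
  ultimately show ?thesis
    by (rule card_inj_on_le[OF _ _ assms(2)])
qed

lemma disjoint_refinement_inj:
  assumes "pairwise disjnt \<U>" "\<forall>U\<in>\<U>. \<exists>W\<in>\<W>. W \<noteq> {} \<and> W \<subseteq> U"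
  obtains g where "inj_on g \<U>" "g ` \<U> \<subseteq> \<W>" "\<forall>U\<in>\<U>. g U \<noteq> {} \<and> g U \<subseteq> U"
proof -
  have "\<forall>U\<in>\<U>. \<exists>W. W \<in> \<W> \<and> W \<noteq> {} \<and> W \<subseteq> U"
    using assms(2) by blast
  from bchoice[OF this] obtain g where g: "\<forall>U\<in>\<U>. g U \<in> \<W> \<and> g U \<noteq> {} \<and> g U \<subseteq> U" ..
  show ?thesis
  proof (rule that)
    show "g ` \<U> \<subseteq> \<W>" "\<forall>U\<in>\<U>. g U \<noteq> {} \<and> g U \<subseteq> U"
      using g by (simp_all add: image_subset_iff)
    show "inj_on g \<U>"
    proof (rule inj_onI)
      fix U V assume UV: "U \<in> \<U>" "V \<in> \<U>" "g U = g V"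
      then have "\<not> disjnt U V"
        using g by (metis disjnt_subset1 disjnt_subset2 disjnt_self_iff_empty)
      then show "U = V"
        using assms(1) UV(1,2) by (meson pairwiseD)
    qed
  qed
qed

lemma card_le_disjoint_refinement:
  assumes "pairwise disjnt \<U>" "finite \<W>" "\<forall>U\<in>\<U>. \<exists>W\<in>\<W>. W \<noteq> {} \<and> W \<subseteq> U"
  shows "card \<U> \<le> card \<W>"
proof -
  obtain g where g: "inj_on g \<U>" "g ` \<U> \<subseteq> \<W>" "\<forall>U\<in>\<U>. g U \<noteq> {} \<and> g U \<subseteq> U"
    by (rule disjoint_refinement_inj[OF assms(1,3)])
  show ?thesis
    by (rule card_inj_on_le[OF g(1,2) assms(2)])
qed

lemma disjoint_refinement_card_eq:
  assumes "pairwise disjnt \<U>" "finite \<W>" "\<forall>U\<in>\<U>. \<exists>W\<in>\<W>. W \<noteq> {} \<and> W \<subseteq> U"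
    and "card \<W> \<le> card \<U>" "W \<in> \<W>"
  shows "\<exists>U\<in>\<U>. W \<subseteq> U"
proof -
  obtain g where g: "inj_on g \<U>" "g ` \<U> \<subseteq> \<W>" "\<forall>U\<in>\<U>. g U \<noteq> {} \<and> g U \<subseteq> U"
    by (rule disjoint_refinement_inj[OF assms(1,3)])
  have "card (g ` \<U>) = card \<W>"
    using card_image[OF g(1)] card_mono[OF assms(2) g(2)] assms(4) by linarith
  then have "g ` \<U> = \<W>"
    using card_subset_eq[OF assms(2) g(2)] by blast
  then show ?thesis
    using assms(5) g(3) by blast
qed

lemma incseq_bounded_eventually_const:
  fixes k :: "nat \<Rightarrow> nat"
  assumes "incseq k" "\<And>n. k n \<le> M"
  obtains N where "\<And>n. N \<le> n \<Longrightarrow> k n = k N"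
proof -
  have "range k \<subseteq> {..M}"
    using assms(2) by auto
  then have fin: "finite (range k)"
    by (rule finite_subset) simp
  have "Max (range k) \<in> range k"
    using fin by (intro Max_in) auto
  then obtain N where N: "Max (range k) = k N" ..
  have "k n = k N" if "N \<le> n" for n
    using incseqD[OF assms(1) that] Max_ge[OF fin, of "k n"] N by simp
  then show ?thesis
    using that by blast
qed

lemma Hausdorff_space_separate_finite:
  assumes "Hausdorff_space X" "finite A" "A \<subseteq> topspace X"
  obtains H where "\<And>a. a \<in> A \<Longrightarrow> openin X (H a) \<and> a \<in> H a" "disjoint_family_on H A"
proof -
  have "\<forall>x y. \<exists>U V. x \<in> topspace X \<and> y \<in> topspace X \<and> x \<noteq> y \<longrightarrow>
      openin X U \<and> openin X V \<and> x \<in> U \<and> y \<in> V \<and> disjnt U V"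
    using assms(1) unfolding Hausdorff_space_def by blast
  then obtain U V where UV: "\<And>x y. x \<in> topspace X \<Longrightarrow> y \<in> topspace X \<Longrightarrow> x \<noteq> y \<Longrightarrow>
      openin X (U x y) \<and> openin X (V x y) \<and> x \<in> U x y \<and> y \<in> V x y \<and> disjnt (U x y) (V x y)"
    by metis
  define H where "H a = topspace X \<inter> \<Inter>((\<lambda>b. U a b \<inter> V b a) ` (A - {a}))" for a
  have "openin X (H a) \<and> a \<in> H a" if a: "a \<in> A" for a
  proof
    have "openin X (U a b \<inter> V b a)" if "b \<in> A - {a}" for b
      using UV[of a b] UV[of b a] that a assms(3) by (intro openin_Int) auto
    then show "openin X (H a)"
      unfolding H_def using assms(2) by (intro openin_Int_Inter) auto
    show "a \<in> H a"
      unfolding H_def using assms(3) UV a by auto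
  qed
  moreover have "disjoint_family_on H A"
    unfolding disjoint_family_on_def
  proof (intro ballI impI)
    fix a b assume "a \<in> A" "b \<in> A" "a \<noteq> b"
    then have "H a \<subseteq> U a b" "H b \<subseteq> V a b" "disjnt (U a b) (V a b)"
      using UV assms(3) unfolding H_def by blast+
    then show "H a \<inter> H b = {}"
      unfolding disjnt_def by blast
  qed
  ultimately show ?thesis
    using that by blast
qed

section \<open>Bases of countable order on the hyperspace\<close>

definition disjoint_vboxes :: "'a topology \<Rightarrow> 'a set set \<Rightarrow> 'a set set set" where
  "disjoint_vboxes X R = {vbox X \<U> | \<U>. finite \<U> \<and> \<U> \<noteq> {} \<and> \<U> \<subseteq> R \<and> pairwise disjnt \<U>}"

lemma disjoint_vbox_inside:
  assumes H: "Hausdorff_space X" and R: "is_base X R"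
    and \<V>: "finite \<V>" "\<forall>V\<in>\<V>. openin X V" "A \<in> vbox X \<V>"
  obtains \<U> where "finite \<U>" "\<U> \<noteq> {}" "\<U> \<subseteq> R" "pairwise disjnt \<U>"
    "A \<in> vbox X \<U>" "vbox X \<U> \<subseteq> vbox X \<V>"
proof -
  have A: "finite A" "A \<noteq> {}" "A \<subseteq> topspace X"
    using \<V>(3) unfolding vbox_def fin_subsets_def by auto
  obtain H where H: "\<And>a. a \<in> A \<Longrightarrow> openin X (H a) \<and> a \<in> H a" "disjoint_family_on H A"
    using Hausdorff_space_separate_finite[OF H A(1,3)] by blast
  have "\<exists>U. U \<in> R \<and> a \<in> U \<and> U \<subseteq> vbox_core X \<V> a \<inter> H a" if "a \<in> A" for a
  proof -
    have "openin X (vbox_core X \<V> a \<inter> H a)"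
      using openin_vbox_core[OF \<V>(1,2)] H(1)[OF that] by blast
    moreover have "a \<in> vbox_core X \<V> a \<inter> H a"
      using in_vbox_core[OF \<V>(3) that] H(1)[OF that] by blast
    ultimately show ?thesis
      using is_baseE[OF R] by metis
  qed
  then obtain U where U: "\<And>a. a \<in> A \<Longrightarrow> U a \<in> R \<and> a \<in> U a \<and> U a \<subseteq> vbox_core X \<V> a \<inter> H a"
    by metis
  have "pairwise disjnt (U ` A)"
    unfolding pairwise_def disjnt_def
  proof (intro ballI impI)
    fix P Q assume "P \<in> U ` A" "Q \<in> U ` A" "P \<noteq> Q"
    then obtain a b where "a \<in> A" "b \<in> A" "a \<noteq> b" "P = U a" "Q = U b"
      by blast
    then show "P \<inter> Q = {}"
      using U H(2) unfolding disjoint_family_on_def by blast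
  qed
  moreover have "finite (U ` A)" "U ` A \<noteq> {}" "U ` A \<subseteq> R"
    using U A by auto
  moreover have "A \<in> vbox X (U ` A)" "vbox X (U ` A) \<subseteq> vbox X \<V>"
    using vbox_refine[OF \<V>(3), of U] U by blast+
  ultimately show ?thesis
    using that by blast
qed

lemma is_base_disjoint_vboxes:
  assumes H: "Hausdorff_space X" and R: "is_base X R"
  shows "is_base (vietoris_fin X) (disjoint_vboxes X R)"
  unfolding is_base_def
proof (intro conjI ballI allI impI)
  fix b assume "b \<in> disjoint_vboxes X R"
  then obtain \<U> where "b = vbox X \<U>" "finite \<U>" "\<U> \<noteq> {}" "\<U> \<subseteq> R"
    unfolding disjoint_vboxes_def by blast
  then show "openin (vietoris_fin X) b"
    using is_base_openin[OF R] by (metis openin_vbox subsetD)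
next
  fix \<O> A assume "openin (vietoris_fin X) \<O> \<and> A \<in> \<O>"
  then obtain \<V> where \<V>: "finite \<V>" "\<forall>V\<in>\<V>. openin X V" "A \<in> vbox X \<V>" "vbox X \<V> \<subseteq> \<O>"
    by (metis openin_vietoris_finE)
  obtain \<U> where "finite \<U>" "\<U> \<noteq> {}" "\<U> \<subseteq> R" "pairwise disjnt \<U>"
    and \<U>: "A \<in> vbox X \<U>" "vbox X \<U> \<subseteq> vbox X \<V>"
    by (rule disjoint_vbox_inside[OF H R \<V>(1-3)])
  then have "vbox X \<U> \<in> disjoint_vboxes X R"
    unfolding disjoint_vboxes_def by blast
  with \<U> \<V>(4) show "\<exists>b\<in>disjoint_vboxes X R. A \<in> b \<and> b \<subseteq> \<O>"
    by blast
qed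

text \<open>Along a decreasing chain of boxes of finite disjoint families around a fixed finite set,
  the families can only grow in cardinality (each member contains a member of the next
  family) and are bounded by the size of the set, so eventually each family refines the
  previous one.\<close>
lemma disjoint_vbox_chain_nested:
  assumes fin: "\<And>n. finite (\<U> n)" and disj: "\<And>n. pairwise disjnt (\<U> n)"
    and top: "\<And>n. \<forall>U\<in>\<U> n. U \<subseteq> topspace X"
    and A: "\<And>n. A \<in> vbox X (\<U> n)" and dec: "\<And>n. vbox X (\<U> (Suc n)) \<subseteq> vbox X (\<U> n)"
  obtains N where "\<And>n W. N \<le> n \<Longrightarrow> W \<in> \<U> (Suc n) \<Longrightarrow> \<exists>U\<in>\<U> n. W \<subseteq> U"
proof -
  have A_fin: "finite A" "A \<noteq> {}"
    using A[of 0] unfolding vbox_def fin_subsets_def by simp_all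
  have meets: "\<forall>U\<in>\<U> n. A \<inter> U \<noteq> {}" for n
    using A[of n] unfolding vbox_def by simp
  have ne: "\<U> n \<noteq> {}" for n
    using A[of n] A_fin(2) unfolding vbox_def by auto
  have refines: "\<forall>U\<in>\<U> n. \<exists>W\<in>\<U> (Suc n). W \<noteq> {} \<and> W \<subseteq> U" for n
  proof
    fix U assume "U \<in> \<U> n"
    from vbox_subset_imp_refines[OF dec fin ne top this]
    obtain W where W: "W \<in> \<U> (Suc n)" "W \<subseteq> U" ..
    moreover have "W \<noteq> {}"
      using meets W(1) by auto
    ultimately show "\<exists>W\<in>\<U> (Suc n). W \<noteq> {} \<and> W \<subseteq> U"
      by (intro bexI[of _ W] conjI)
  qed
  have inc: "incseq (\<lambda>n. card (\<U> n))"
    by (rule incseq_SucI) (rule card_le_disjoint_refinement[OF disj fin refines])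
  have bounded: "card (\<U> n) \<le> card A" for n
    by (rule card_le_card_if_disjoint_meets[OF disj A_fin(1) meets])
  obtain N where N: "\<And>n. N \<le> n \<Longrightarrow> card (\<U> n) = card (\<U> N)"
    using incseq_bounded_eventually_const[of "\<lambda>n. card (\<U> n)", OF inc bounded] by metis
  show ?thesis
  proof (rule that)
    fix n W assume n: "N \<le> n" and W: "W \<in> \<U> (Suc n)"
    have "card (\<U> (Suc n)) \<le> card (\<U> n)"
      using N[OF n] N[of "Suc n"] n by simp
    then show "\<exists>U\<in>\<U> n. W \<subseteq> U"
      by (rule disjoint_refinement_card_eq[OF disj fin refines _ W])
  qed
qed

definition member_containing :: "'a set set \<Rightarrow> 'a \<Rightarrow> 'a set" where
  "member_containing \<U> a = (THE U. U \<in> \<U> \<and> a \<in> U)"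

lemma member_containing_eq:
  assumes disj: "pairwise disjnt \<U>" and U: "U \<in> \<U>" "a \<in> U"
  shows "member_containing \<U> a = U"
  unfolding member_containing_def
proof (rule the_equality)
  fix V assume V: "V \<in> \<U> \<and> a \<in> V"
  show "V = U"
  proof (rule ccontr)
    assume "V \<noteq> U"
    then have "disjnt V U"
      using pairwiseD(1)[OF disj conjunct1[OF V] U(1)] by blast
    with V U(2) show False
      unfolding disjnt_iff by blast
  qed
qed (use U in simp)

lemma member_containing:
  assumes "pairwise disjnt \<U>" "a \<in> \<Union>\<U>"
  shows "member_containing \<U> a \<in> \<U> \<and> a \<in> member_containing \<U> a"
proof -
  obtain U where "U \<in> \<U>" "a \<in> U"
    using assms(2) by blast
  then show ?thesis
    using member_containing_eq[OF assms(1)] by simp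
qed

lemma vbox_eq_member_containing_image:
  assumes disj: "pairwise disjnt \<U>" and A: "A \<in> vbox X \<U>"
  shows "\<U> = member_containing \<U> ` A"
proof
  show "\<U> \<subseteq> member_containing \<U> ` A"
  proof
    fix U assume U: "U \<in> \<U>"
    then obtain a where "a \<in> A" "a \<in> U"
      using A unfolding vbox_def by blast
    then show "U \<in> member_containing \<U> ` A"
      using member_containing_eq[OF disj U] by blast
  qed
  show "member_containing \<U> ` A \<subseteq> \<U>"
    using member_containing[OF disj] A unfolding vbox_def by blast
qed

lemma disjoint_vbox_chain_members_decseq:
  assumes fin: "\<And>n. finite (\<U> n)" and disj: "\<And>n. pairwise disjnt (\<U> n)"
    and top: "\<And>n. \<forall>U\<in>\<U> n. U \<subseteq> topspace X"
    and A: "\<And>n. A \<in> vbox X (\<U> n)" and dec: "\<And>n. vbox X (\<U> (Suc n)) \<subseteq> vbox X (\<U> n)"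
  obtains N where "\<And>a. a \<in> A \<Longrightarrow> decseq (\<lambda>n. member_containing (\<U> (n + N)) a)"
proof -
  obtain N where N: "\<And>n W. N \<le> n \<Longrightarrow> W \<in> \<U> (Suc n) \<Longrightarrow> \<exists>U\<in>\<U> n. W \<subseteq> U"
    using disjoint_vbox_chain_nested[of \<U> X A, OF fin disj top A dec] by metis
  have member: "member_containing (\<U> n) a \<in> \<U> n \<and> a \<in> member_containing (\<U> n) a"
    if "a \<in> A" for n a
    using member_containing[OF disj] A[of n] that unfolding vbox_def by blast
  have "decseq (\<lambda>n. member_containing (\<U> (n + N)) a)" if a: "a \<in> A" for a
  proof (rule decseq_SucI)
    fix n
    have "\<exists>U\<in>\<U> (n + N). member_containing (\<U> (Suc (n + N))) a \<subseteq> U"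
      using N[of "n + N"] member[OF a, of "Suc (n + N)"] by simp
    then obtain U where U: "U \<in> \<U> (n + N)" "member_containing (\<U> (Suc (n + N))) a \<subseteq> U" ..
    then have "a \<in> U"
      using member[OF a] by blast
    with U show "member_containing (\<U> (Suc n + N)) a \<subseteq> member_containing (\<U> (n + N)) a"
      using member_containing_eq[OF disj] by simp
  qed
  then show ?thesis
    using that by blast
qed

lemma vbox_shrinks_if_members_shrink:
  assumes disj: "\<And>n. pairwise disjnt (\<U> n)" and A: "\<And>n. A \<in> vbox X (\<U> n)"
    and members: "\<And>a. a \<in> A \<Longrightarrow> decseq (\<lambda>n. member_containing (\<U> (n + N)) a) \<and>
      shrinks_to X a (\<lambda>n. member_containing (\<U> (n + N)) a)"
  shows "shrinks_to (vietoris_fin X) A (\<lambda>n. vbox X (\<U> n))"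
  unfolding shrinks_to_def
proof (intro allI impI)
  let ?M = "\<lambda>n a. member_containing (\<U> n) a"
  fix \<O> assume \<O>: "openin (vietoris_fin X) \<O> \<and> A \<in> \<O>"
  obtain \<V> where \<V>: "finite \<V>" "\<V> \<noteq> {}" "\<forall>V\<in>\<V>. openin X V" "A \<in> vbox X \<V>" "vbox X \<V> \<subseteq> \<O>"
    by (rule openin_vietoris_finE[OF conjunct1[OF \<O>] conjunct2[OF \<O>]])
  have "\<forall>a\<in>A. \<exists>k. ?M (k + N) a \<subseteq> vbox_core X \<V> a"
    using members openin_vbox_core[OF \<V>(1,3)] in_vbox_core[OF \<V>(4)] unfolding shrinks_to_def
    by blast
  from bchoice[OF this] obtain k where k: "\<forall>a\<in>A. ?M (k a + N) a \<subseteq> vbox_core X \<V> a" ..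
  define n\<^sub>0 where "n\<^sub>0 = Max (k ` A) + N"
  have "a \<in> ?M n\<^sub>0 a \<and> ?M n\<^sub>0 a \<subseteq> vbox_core X \<V> a" if a: "a \<in> A" for a
  proof -
    have "k a \<le> Max (k ` A)"
      using A[of 0] a unfolding vbox_def fin_subsets_def by simp
    then have "?M n\<^sub>0 a \<subseteq> ?M (k a + N) a"
      unfolding n\<^sub>0_def using decseqD[OF conjunct1[OF members[OF a]], of "k a" "Max (k ` A)"] by simp
    moreover have "a \<in> ?M n\<^sub>0 a"
      using member_containing[OF disj] A[of n\<^sub>0] a unfolding vbox_def by blast
    ultimately show ?thesis
      using k a by blast
  qed
  then have "vbox X (?M n\<^sub>0 ` A) \<subseteq> \<O>"
    using vbox_refine(2)[OF \<V>(4)] \<V>(5) by blast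
  then have "vbox X (\<U> n\<^sub>0) \<subseteq> \<O>"
    using vbox_eq_member_containing_image[OF disj A] by simp
  then show "\<exists>n. vbox X (\<U> n) \<subseteq> \<O>" ..
qed

text \<open>Once the member containing \<open>a \<in> A\<close> decreases along the chain, the shifted countable
  order property makes it shrink to \<open>a\<close>.\<close>
lemma disjoint_vbox_chain_shrinks:
  assumes R: "\<And>N. countable_order_bases X (\<lambda>n. R (n + N))"
    and fin: "\<And>n. finite (\<U> n)" and disj: "\<And>n. pairwise disjnt (\<U> n)" and sub: "\<And>n. \<U> n \<subseteq> R n"
    and A: "\<And>n. A \<in> vbox X (\<U> n)" and dec: "decseq (\<lambda>n. vbox X (\<U> n))"
  shows "shrinks_to (vietoris_fin X) A (\<lambda>n. vbox X (\<U> n))"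
proof -
  have top: "\<forall>U\<in>\<U> n. U \<subseteq> topspace X" for n
  proof
    fix U assume "U \<in> \<U> n"
    moreover have "is_base X (R n)"
      using R[of 0] unfolding countable_order_bases_def by simp
    ultimately have "openin X U"
      using sub[of n] is_base_openin by blast
    then show "U \<subseteq> topspace X"
      by (rule openin_subset)
  qed
  have dec_Suc: "vbox X (\<U> (Suc n)) \<subseteq> vbox X (\<U> n)" for n
    using decseqD[OF dec, of n "Suc n"] by simp
  obtain N where N: "\<And>a. a \<in> A \<Longrightarrow> decseq (\<lambda>n. member_containing (\<U> (n + N)) a)"
    using disjoint_vbox_chain_members_decseq[of \<U> X A, OF fin disj top A dec_Suc] by metis
  have "shrinks_to X a (\<lambda>n. member_containing (\<U> (n + N)) a)" if a: "a \<in> A" for a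
  proof (rule countable_order_basesD[OF R[of N]])
    show "a \<in> member_containing (\<U> (n + N)) a \<and> member_containing (\<U> (n + N)) a \<in> R (n + N)" for n
      using member_containing[OF disj] A[of "n + N"] a sub unfolding vbox_def by blast
  qed (rule N[OF a])
  with N show ?thesis
    by (intro vbox_shrinks_if_members_shrink[OF disj A]) blast
qed

lemma has_BCO_vietoris_fin:
  assumes H: "Hausdorff_space X" and "has_BCO X"
  shows "has_BCO (vietoris_fin X)"
proof -
  obtain B where "countable_order_bases X B"
    using assms(2) unfolding has_BCO_iff ..
  then have R: "countable_order_bases X (\<lambda>n. chain_ends B (n + N))" for N
    by (rule countable_order_bases_chain_ends_shift)
  define C where "C n = disjoint_vboxes X (chain_ends B n)" for n
  have "countable_order_bases (vietoris_fin X) C"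
    unfolding countable_order_bases_def
  proof (intro conjI allI impI)
    fix n
    have "is_base X (chain_ends B n)"
      using R[of 0] unfolding countable_order_bases_def by simp
    then show "is_base (vietoris_fin X) (C n)"
      unfolding C_def by (rule is_base_disjoint_vboxes[OF H])
  next
    fix A b assume b: "(\<forall>n. A \<in> b n \<and> b n \<in> C n) \<and> decseq b"
    have "\<exists>\<U>. b n = vbox X \<U> \<and> finite \<U> \<and> \<U> \<noteq> {} \<and> \<U> \<subseteq> chain_ends B n \<and> pairwise disjnt \<U>" for n
      using b unfolding C_def disjoint_vboxes_def mem_Collect_eq by simp
    then obtain \<U> where \<U>: "\<forall>n. b n = vbox X (\<U> n) \<and> finite (\<U> n) \<and> \<U> n \<noteq> {} \<and>
        \<U> n \<subseteq> chain_ends B n \<and> pairwise disjnt (\<U> n)"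
      using choice[of "\<lambda>n \<U>. b n = vbox X \<U> \<and> finite \<U> \<and> \<U> \<noteq> {} \<and> \<U> \<subseteq> chain_ends B n \<and> pairwise disjnt \<U>"]
      by blast
    then have "b = (\<lambda>n. vbox X (\<U> n))"
      by auto
    moreover have "shrinks_to (vietoris_fin X) A (\<lambda>n. vbox X (\<U> n))"
      using R \<U> b \<open>b = (\<lambda>n. vbox X (\<U> n))\<close>
      by (intro disjoint_vbox_chain_shrinks[where R = "chain_ends B"]) auto
    ultimately show "shrinks_to (vietoris_fin X) A b"
      by simp
  qed
  then show ?thesis
    unfolding has_BCO_iff by (rule exI[of _ C])
qed

lemma singleton_in_vbox: "{x} \<in> vbox X \<V> \<longleftrightarrow> x \<in> topspace X \<and> \<V> \<noteq> {} \<and> (\<forall>V\<in>\<V>. x \<in> V)"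
  unfolding vbox_def fin_subsets_def by auto

lemma continuous_map_singleton_vietoris_fin: "continuous_map X (vietoris_fin X) (\<lambda>x. {x})"
  unfolding continuous_map_def
proof (intro conjI allI impI)
  show "(\<lambda>x. {x}) \<in> topspace X \<rightarrow> topspace (vietoris_fin X)"
    by (simp add: topspace_vietoris_fin fin_subsets_def)
next
  fix \<O> assume \<O>: "openin (vietoris_fin X) \<O>"
  show "openin X {x \<in> topspace X. {x} \<in> \<O>}"
  proof (subst openin_subopen, intro ballI)
    fix x assume "x \<in> {x \<in> topspace X. {x} \<in> \<O>}"
    then have "{x} \<in> \<O>" by simp
    then obtain \<V> where \<V>: "finite \<V>" "\<V> \<noteq> {}" "\<forall>V\<in>\<V>. openin X V" "{x} \<in> vbox X \<V>"
      "vbox X \<V> \<subseteq> \<O>"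
      by (rule openin_vietoris_finE[OF \<O>])
    have "{y} \<in> \<O>" if y: "y \<in> vbox_core X \<V> x" for y
    proof -
      have "y \<in> topspace X" "\<forall>V\<in>\<V>. y \<in> V"
        using y \<V>(4) unfolding vbox_core_def singleton_in_vbox by auto
      then have "{y} \<in> vbox X \<V>"
        using \<V>(2) unfolding singleton_in_vbox by blast
      then show ?thesis
        using \<V>(5) by blast
    qed
    then have "vbox_core X \<V> x \<subseteq> {y \<in> topspace X. {y} \<in> \<O>}"
      unfolding vbox_core_def by blast
    then show "\<exists>T. openin X T \<and> x \<in> T \<and> T \<subseteq> {x \<in> topspace X. {x} \<in> \<O>}"
      using openin_vbox_core[OF \<V>(1,3)] in_vbox_core[OF \<V>(4)] by blast
  qed
qed

lemma has_BCO_of_vietoris_fin: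
  assumes "has_BCO (vietoris_fin X)"
  shows "has_BCO X"
proof (rule has_BCO_pullback[OF assms continuous_map_singleton_vietoris_fin])
  fix W x assume W: "openin X W" "x \<in> W"
  show "\<exists>\<O>. openin (vietoris_fin X) \<O> \<and> {x} \<in> \<O> \<and> {y \<in> topspace X. {y} \<in> \<O>} \<subseteq> W"
  proof (intro exI conjI)
    show "openin (vietoris_fin X) (vbox X {W})"
      using W by (simp add: openin_vbox)
    show "{x} \<in> vbox X {W}"
      using W openin_subset by (auto simp: singleton_in_vbox)
    show "{y \<in> topspace X. {y} \<in> vbox X {W}} \<subseteq> W"
      by (auto simp: singleton_in_vbox)
  qed
qed

theorem theorem4p1:
  fixes X :: "'a topology"
  assumes "regular_space X" and "Hausdorff_space X"
  shows "has_BCO X \<longleftrightarrow> has_BCO (vietoris_fin X)"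
  using has_BCO_vietoris_fin[OF assms(2)] has_BCO_of_vietoris_fin by blast

end
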